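(* Let $c,m>0$ be constants and let $f:\mathbb{Z}\to\mathbb{Z}$ be a non-decreasing map such that $f(j)-f(i)\leq j-i$ for all integers $i<j$, and $f(j)-f(i)\geq c\,(j-i)$ for all integers $i,j$ with $i+m\leq j$. Let $B$ be an integer-valued random variable with $E[|f(B)|]<+\infty$. Then $$\mathrm{Var}[f(B)]\geq c^2\left(1-\frac{2m}{c\sqrt{\mathrm{Var}[B]}}\right)\mathrm{Var}[B].$$ *)

theory Defs
  imports "HOL-Probability.Probability"
begin

text \<open>Variance as an extended nonnegative real: it is \<infinity> when the second
  central moment diverges.  The mean is the Lebesgue integral (the random variable
  will be integrable in our application).\<close>
definition evariance :: "'a measure \<Rightarrow> ('a \<Rightarrow> real) \<Rightarrow> ennreal" where
  "evariance M X = (\<integral>\<^sup>+ x. ennreal ((X x - (\<integral>y. X y \<partial>M))\<^sup>2) \<partial>M)"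

end

theory Submission
  imports Defs
begin

text \<open>Let \<mu> = E[B], \<sigma>^2 = Var[B], k = \<lfloor>\<mu>\<rfloor>, Y = B - \<mu> and a = E[f(B)]. Because f grows
  with slope at least c over distances of at least m, pointwise
  (f(B) - f(k)) Y \<ge> c (B - k) Y - c m |Y|. Since E[Y] = 0, this bounds the covariance of f(B)
  and B from below by c \<sigma>^2 - c m E|Y| \<ge> c \<sigma>^2 - c m \<sigma>, and expanding
  E[(f(B) - a - c Y)^2] \<ge> 0 gives Var[f(B)] \<ge> c^2 \<sigma>^2 - 2 c^2 m \<sigma>. Finally c \<le> 1, since f is
  1-Lipschitz, so this is at least c^2 \<sigma>^2 - 2 c m \<sigma>.\<close>

lemma coarse_expansion_lower_bound:
  fixes f :: "int \<Rightarrow> int" and c m :: real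
  assumes "mono f" and "c \<ge> 0" and "m \<ge> 0"
    and expand: "\<And>i j. real_of_int i + m \<le> real_of_int j \<Longrightarrow>
               real_of_int (f j - f i) \<ge> c * real_of_int (j - i)"
    and "i \<le> j"
  shows "c * real_of_int (j - i) - c * m \<le> real_of_int (f j - f i)"
proof (cases "real_of_int i + m \<le> real_of_int j")
  case True
  have "0 \<le> c * m" using \<open>c \<ge> 0\<close> \<open>m \<ge> 0\<close> by simp
  with expand[OF True] show ?thesis by linarith
next
  case False
  then have "c * real_of_int (j - i) \<le> c * m" using \<open>c \<ge> 0\<close> by (intro mult_left_mono) auto
  moreover have "f i \<le> f j" using \<open>mono f\<close> \<open>i \<le> j\<close> by (rule monoD)
  ultimately show ?thesis by simp
qed

lemma coarse_expansion_slope_le_one: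
  fixes f :: "int \<Rightarrow> int" and c m :: real
  assumes lipschitz: "\<And>i j. i < j \<Longrightarrow> f j - f i \<le> j - i"
    and expand: "\<And>i j. real_of_int i + m \<le> real_of_int j \<Longrightarrow>
               real_of_int (f j - f i) \<ge> c * real_of_int (j - i)"
  shows "c \<le> 1"
proof -
  define j where "j = max 1 \<lceil>m\<rceil>"
  have "0 < j" and "real_of_int 0 + m \<le> real_of_int j" unfolding j_def by linarith+
  then have "c * real_of_int j \<le> real_of_int (f j - f 0)"
    using expand[of 0 j] by simp
  also have "\<dots> \<le> 1 * real_of_int j"
    using lipschitz[OF \<open>0 < j\<close>] by simp
  finally show ?thesis using \<open>0 < j\<close> by (simp add: mult_le_cancel_right)
qed

lemma coarse_expansion_abs_bound:
  fixes f :: "int \<Rightarrow> int" and c m :: real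
  assumes "mono f" and "c \<ge> 0" and "m \<ge> 0"
    and "\<And>i j. real_of_int i + m \<le> real_of_int j \<Longrightarrow>
               real_of_int (f j - f i) \<ge> c * real_of_int (j - i)"
  shows "c * \<bar>real_of_int j\<bar> \<le> \<bar>real_of_int (f j - f 0)\<bar> + c * m"
proof (cases "0 \<le> j")
  case True
  then show ?thesis using coarse_expansion_lower_bound[OF assms True] by simp
next
  case False
  then show ?thesis using coarse_expansion_lower_bound[OF assms, of j 0] by simp
qed

lemma coarse_expansion_floor_product_bound:
  fixes f :: "int \<Rightarrow> int" and c m \<mu> :: real
  assumes "mono f" and "c \<ge> 0" and "m \<ge> 0"
    and "\<And>i j. real_of_int i + m \<le> real_of_int j \<Longrightarrow>
               real_of_int (f j - f i) \<ge> c * real_of_int (j - i)"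
  shows "c * (j - \<lfloor>\<mu>\<rfloor>) * (j - \<mu>) - c * m * \<bar>j - \<mu>\<bar> \<le> real_of_int (f j - f \<lfloor>\<mu>\<rfloor>) * (j - \<mu>)"
proof (cases "\<mu> < j")
  case True
  then have "\<lfloor>\<mu>\<rfloor> \<le> j" by linarith
  from coarse_expansion_lower_bound[OF assms this]
  have "(c * (j - \<lfloor>\<mu>\<rfloor>) - c * m) * (j - \<mu>) \<le> real_of_int (f j - f \<lfloor>\<mu>\<rfloor>) * (j - \<mu>)"
    using True by (intro mult_right_mono) auto
  with True show ?thesis by (simp add: algebra_simps)
next
  case False
  then have "j \<le> \<lfloor>\<mu>\<rfloor>" by (simp add: le_floor_iff)
  from coarse_expansion_lower_bound[OF assms this]
  have "(c * (\<lfloor>\<mu>\<rfloor> - j) - c * m) * (\<mu> - j) \<le> real_of_int (f \<lfloor>\<mu>\<rfloor> - f j) * (\<mu> - j)"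
    using False by (intro mult_right_mono) auto
  with False show ?thesis by (simp add: algebra_simps)
qed

lemma (in finite_measure) square_integrable_if_abs_le_affine:
  fixes X G :: "'a \<Rightarrow> real"
  assumes "X \<in> borel_measurable M" and "integrable M (\<lambda>x. (G x)\<^sup>2)"
    and bound: "\<And>x. \<bar>X x\<bar> \<le> \<alpha> * \<bar>G x\<bar> + \<beta>"
  shows "integrable M (\<lambda>x. (X x)\<^sup>2)"
proof (rule Bochner_Integration.integrable_bound)
  show "integrable M (\<lambda>x. 2 * \<alpha>\<^sup>2 * (G x)\<^sup>2 + 2 * \<beta>\<^sup>2)"
    using assms(2) by auto
  show "(\<lambda>x. (X x)\<^sup>2) \<in> borel_measurable M"
    using assms(1) by measurable
  have "(X x)\<^sup>2 \<le> 2 * \<alpha>\<^sup>2 * (G x)\<^sup>2 + 2 * \<beta>\<^sup>2" for x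
  proof -
    have "(X x)\<^sup>2 = \<bar>X x\<bar>\<^sup>2" by simp
    also have "\<dots> \<le> (\<alpha> * \<bar>G x\<bar> + \<beta>)\<^sup>2" using bound by (intro power_mono) auto
    also have "\<dots> \<le> 2 * \<alpha>\<^sup>2 * (G x)\<^sup>2 + 2 * \<beta>\<^sup>2"
      using zero_le_power2[of "\<alpha> * \<bar>G x\<bar> - \<beta>"] by (simp add: power2_eq_square algebra_simps)
    finally show ?thesis .
  qed
  then show "AE x in M. norm ((X x)\<^sup>2) \<le> norm (2 * \<alpha>\<^sup>2 * (G x)\<^sup>2 + 2 * \<beta>\<^sup>2)"
    by (auto intro: order_trans[OF _ abs_ge_self])
qed

lemma (in finite_measure) integrable_centered_square:
  fixes X :: "'a \<Rightarrow> real"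
  assumes "X \<in> borel_measurable M" and "integrable M (\<lambda>x. (X x)\<^sup>2)"
  shows "integrable M (\<lambda>x. (X x - a)\<^sup>2)"
  using assms square_integrable_imp_integrable[OF assms] by (simp add: power2_diff)

lemma (in prob_space) integrable_centered_square_if_evariance_finite:
  assumes "X \<in> borel_measurable M" and "evariance M X \<noteq> \<infinity>"
  shows "integrable M (\<lambda>x. (X x - expectation X)\<^sup>2)"
  using assms unfolding evariance_def by (intro integrableI_nonneg) (auto simp: top.not_eq_extremum)

lemma (in prob_space) evariance_eq_variance:
  assumes "integrable M (\<lambda>x. (X x - expectation X)\<^sup>2)"
  shows "evariance M X = ennreal (variance X)"
  unfolding evariance_def using assms by (intro nn_integral_eq_integral) auto

lemma (in prob_space) expectation_abs_le_sqrt_second_moment: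
  fixes Y :: "'a \<Rightarrow> real"
  assumes "Y \<in> borel_measurable M" and "integrable M (\<lambda>x. (Y x)\<^sup>2)"
  shows "expectation (\<lambda>x. \<bar>Y x\<bar>) \<le> sqrt (expectation (\<lambda>x. (Y x)\<^sup>2))"
proof (rule real_le_rsqrt)
  have "integrable M Y" using assms by (rule square_integrable_imp_integrable)
  then have "variance (\<lambda>x. \<bar>Y x\<bar>) = expectation (\<lambda>x. (Y x)\<^sup>2) - (expectation (\<lambda>x. \<bar>Y x\<bar>))\<^sup>2"
    using assms(2) by (subst variance_eq) auto
  with variance_positive show "(expectation (\<lambda>x. \<bar>Y x\<bar>))\<^sup>2 \<le> expectation (\<lambda>x. (Y x)\<^sup>2)"
    by (metis diff_ge_0_iff_ge)
qed

lemma (in prob_space) second_moment_ge_of_correlation_bound: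
  fixes G Y :: "'a \<Rightarrow> real"
  assumes "Y \<in> borel_measurable M"
    and "integrable M (\<lambda>x. (G x)\<^sup>2)" and "integrable M (\<lambda>x. (Y x)\<^sup>2)"
    and "expectation Y = 0" and "c \<ge> 0" and "e \<ge> 0"
    and correlation: "\<And>x. c * (Y x)\<^sup>2 + L * Y x - e * \<bar>Y x\<bar> \<le> G x * Y x"
  shows "c\<^sup>2 * expectation (\<lambda>x. (Y x)\<^sup>2) - 2 * c * e * sqrt (expectation (\<lambda>x. (Y x)\<^sup>2))
           \<le> expectation (\<lambda>x. (G x)\<^sup>2)"
proof -
  have "integrable M Y" using assms(1,3) by (rule square_integrable_imp_integrable)
  have pointwise: "c\<^sup>2 * (Y x)\<^sup>2 + 2 * c * L * Y x - 2 * c * e * \<bar>Y x\<bar> \<le> (G x)\<^sup>2" for x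
  proof -
    have "2 * c * (c * (Y x)\<^sup>2 + L * Y x - e * \<bar>Y x\<bar>) \<le> 2 * c * (G x * Y x)"
      using correlation \<open>c \<ge> 0\<close> by (intro mult_left_mono) auto
    moreover have "0 \<le> (G x - c * Y x)\<^sup>2" by simp
    ultimately show ?thesis by (simp add: power2_eq_square algebra_simps)
  qed
  have "c\<^sup>2 * expectation (\<lambda>x. (Y x)\<^sup>2) - 2 * c * e * expectation (\<lambda>x. \<bar>Y x\<bar>)
      = expectation (\<lambda>x. c\<^sup>2 * (Y x)\<^sup>2 + 2 * c * L * Y x - 2 * c * e * \<bar>Y x\<bar>)"
    using \<open>integrable M Y\<close> assms(3,4) by simp
  also have "\<dots> \<le> expectation (\<lambda>x. (G x)\<^sup>2)"
    using pointwise \<open>integrable M Y\<close> assms(2,3) by (intro integral_mono) auto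
  finally have "c\<^sup>2 * expectation (\<lambda>x. (Y x)\<^sup>2) - 2 * c * e * expectation (\<lambda>x. \<bar>Y x\<bar>)
      \<le> expectation (\<lambda>x. (G x)\<^sup>2)" .
  moreover have "2 * c * e * expectation (\<lambda>x. \<bar>Y x\<bar>) \<le> 2 * c * e * sqrt (expectation (\<lambda>x. (Y x)\<^sup>2))"
    using expectation_abs_le_sqrt_second_moment[OF assms(1,3)] assms(5,6) by (intro mult_left_mono) auto
  ultimately show ?thesis by linarith
qed

lemma (in prob_space) square_integrable_of_coarse_expansion:
  fixes B :: "'a \<Rightarrow> int" and f :: "int \<Rightarrow> int" and c m a :: real
  assumes "mono f" and "c > 0" and "m \<ge> 0"
    and expand: "\<And>i j. real_of_int i + m \<le> real_of_int j \<Longrightarrow>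
               real_of_int (f j - f i) \<ge> c * real_of_int (j - i)"
    and "B \<in> measurable M (count_space UNIV)"
    and "integrable M (\<lambda>x. (real_of_int (f (B x)) - a)\<^sup>2)"
  shows "integrable M (\<lambda>x. (real_of_int (B x))\<^sup>2)"
proof (rule square_integrable_if_abs_le_affine)
  show "(\<lambda>x. real_of_int (B x)) \<in> borel_measurable M"
    using assms(5) by (rule measurable_compose) simp
  show "\<bar>real_of_int (B x)\<bar> \<le> 1 / c * \<bar>real_of_int (f (B x)) - a\<bar> + (\<bar>a - f 0\<bar> / c + m)" for x
    using coarse_expansion_abs_bound[OF assms(1) less_imp_le[OF \<open>c > 0\<close>] \<open>m \<ge> 0\<close> expand, of "B x"] \<open>c > 0\<close>
    by (simp add: field_simps)
qed fact

lemma (in prob_space) variance_ge_of_coarse_expansion: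
  fixes B :: "'a \<Rightarrow> int" and f :: "int \<Rightarrow> int" and c m :: real
  assumes "mono f" and "c \<ge> 0" and "m \<ge> 0"
    and expand: "\<And>i j. real_of_int i + m \<le> real_of_int j \<Longrightarrow>
               real_of_int (f j - f i) \<ge> c * real_of_int (j - i)"
    and "B \<in> measurable M (count_space UNIV)"
    and F_sq: "integrable M (\<lambda>x. (real_of_int (f (B x)) - expectation (\<lambda>x. real_of_int (f (B x))))\<^sup>2)"
    and X_sq: "integrable M (\<lambda>x. (real_of_int (B x))\<^sup>2)"
  shows "c\<^sup>2 * variance (\<lambda>x. real_of_int (B x)) - 2 * c * (c * m) * sqrt (variance (\<lambda>x. real_of_int (B x)))
           \<le> variance (\<lambda>x. real_of_int (f (B x)))"
proof -
  define X where "X = (\<lambda>x. real_of_int (B x))"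
  define F where "F = (\<lambda>x. real_of_int (f (B x)))"
  define a where "a = expectation F"
  define \<mu> where "\<mu> = expectation X"
  have X_meas: "X \<in> borel_measurable M"
    unfolding X_def using assms(5) by (rule measurable_compose) simp
  have "integrable M X" using X_meas X_sq unfolding X_def by (rule square_integrable_imp_integrable)
  then have Y_mean: "expectation (\<lambda>x. X x - \<mu>) = 0"
    by (simp add: \<mu>_def prob_space)
  have Y_sq: "integrable M (\<lambda>x. (X x - \<mu>)\<^sup>2)"
    using X_meas X_sq unfolding X_def by (rule integrable_centered_square)
  have "c\<^sup>2 * variance X - 2 * c * (c * m) * sqrt (variance X) \<le> variance F"
    unfolding \<mu>_def[symmetric] a_def[symmetric]
  proof (rule second_moment_ge_of_correlation_bound[where G = "\<lambda>x. F x - a" and Y = "\<lambda>x. X x - \<mu>"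
        and e = "c * m" and L = "c * (\<mu> - \<lfloor>\<mu>\<rfloor>) + (f \<lfloor>\<mu>\<rfloor> - a)"])
    fix x
    show "c * (X x - \<mu>)\<^sup>2 + (c * (\<mu> - \<lfloor>\<mu>\<rfloor>) + (f \<lfloor>\<mu>\<rfloor> - a)) * (X x - \<mu>) - c * m * \<bar>X x - \<mu>\<bar>
        \<le> (F x - a) * (X x - \<mu>)"
      using coarse_expansion_floor_product_bound[OF assms(1-3) expand, of "B x" \<mu>]
      unfolding X_def F_def by (simp add: power2_eq_square algebra_simps)
  qed (use X_meas F_sq Y_sq Y_mean assms(2,3) in \<open>auto simp: F_def a_def\<close>)
  then show ?thesis by (simp add: X_def F_def)
qed

lemma ennreal_scaled_variance_le:
  fixes c m V W :: real
  assumes "0 < c" and "c \<le> 1" and "0 \<le> m" and "0 \<le> V"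
    and bound: "c\<^sup>2 * V - 2 * c * (c * m) * sqrt V \<le> W"
  shows "ennreal (c\<^sup>2 * (1 - 2 * m / (c * sqrt V))) * ennreal V \<le> ennreal W"
proof -
  have "2 * c * (c * m) * sqrt V \<le> 2 * c * m * sqrt V"
    using mult_left_le_one_le[of "2 * c * m * sqrt V" c] assms(1-4) by (simp add: ac_simps)
  moreover have "c\<^sup>2 * (1 - 2 * m / (c * sqrt V)) * V = c\<^sup>2 * V - 2 * c * m * sqrt V"
    using \<open>0 < c\<close> \<open>0 \<le> V\<close> by (cases "V = 0") (auto simp: field_simps power2_eq_square)
  ultimately have "c\<^sup>2 * (1 - 2 * m / (c * sqrt V)) * V \<le> W"
    using bound by linarith
  then show ?thesis
    using \<open>0 \<le> V\<close> by (simp add: ennreal_mult''[symmetric] ennreal_leI)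
qed

theorem lemma4:
  fixes M :: "'a measure" and B :: "'a \<Rightarrow> int" and f :: "int \<Rightarrow> int"
    and c m :: real
  assumes "prob_space M"
    and "c > 0" and "m > 0"
    and "mono f"
    and "\<And>i j. i < j \<Longrightarrow> f j - f i \<le> j - i"
    and "\<And>i j. real_of_int i + m \<le> real_of_int j \<Longrightarrow>
               real_of_int (f j - f i) \<ge> c * real_of_int (j - i)"
    and "B \<in> measurable M (count_space UNIV)"
    and "integrable M (\<lambda>x. real_of_int (f (B x)))"
  shows "evariance M (\<lambda>x. real_of_int (f (B x))) \<ge>
           ennreal (c\<^sup>2 * (1 - 2 * m / (c * sqrt (enn2real (evariance M (\<lambda>x. real_of_int (B x)))))))
           * evariance M (\<lambda>x. real_of_int (B x))"
proof -
  interpret prob_space M by fact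
  define X where "X = (\<lambda>x. real_of_int (B x))"
  define F where "F = (\<lambda>x. real_of_int (f (B x)))"
  have X_meas: "X \<in> borel_measurable M" and F_meas: "F \<in> borel_measurable M"
    unfolding X_def F_def using assms(7) by (auto intro: measurable_compose)
  show ?thesis
  proof (cases "evariance M F = \<infinity>")
    case True
    then show ?thesis by (simp add: F_def)
  next
    case False
    have F_sq: "integrable M (\<lambda>x. (F x - expectation F)\<^sup>2)"
      using F_meas False by (rule integrable_centered_square_if_evariance_finite)
    have X_sq: "integrable M (\<lambda>x. (X x)\<^sup>2)"
      using square_integrable_of_coarse_expansion[OF assms(4,2) less_imp_le[OF assms(3)] assms(6,7) F_sq[unfolded F_def]]
      unfolding X_def .
    have "evariance M X = ennreal (variance X)"
      using integrable_centered_square[OF X_meas X_sq] by (rule evariance_eq_variance)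
    moreover have "evariance M F = ennreal (variance F)"
      using F_sq by (rule evariance_eq_variance)
    moreover have "c\<^sup>2 * variance X - 2 * c * (c * m) * sqrt (variance X) \<le> variance F"
      using variance_ge_of_coarse_expansion[OF assms(4) less_imp_le[OF assms(2)] less_imp_le[OF assms(3)] assms(6,7)]
        F_sq X_sq unfolding X_def F_def by simp
    moreover have "c \<le> 1" using assms(5,6) by (rule coarse_expansion_slope_le_one)
    ultimately show ?thesis
      using ennreal_scaled_variance_le[of c m "variance X" "variance F"] assms(2,3) variance_positive[of X]
      unfolding X_def F_def by simp
  qed
qed

end
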